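(* Let $m \geq 4$ be an integer with $m \equiv 0 \pmod 4$, and let $(\boldsymbol{x}_n)_{0 \leq n < 2^m}$ be a $(0,m,2)$-net in base $2$ such that $\boldsymbol{x}_0 = \boldsymbol{\gamma} = (\gamma^{(1)},\gamma^{(2)})$, where \[ \gamma^{(1)} = \frac{1}{2^2} + \frac{1}{2^4}+ \cdots + \frac{1}{2^{m/2}}, \qquad \gamma^{(2)} = \frac{1}{2^{m/2+2}} + \frac{1}{2^{m/2+4}} + \cdots + \frac{1}{2^m}. \] Put $N = 2^m$. Then for the interval $J_{\boldsymbol{\gamma}} = [0,\gamma^{(1)}) \times [0,\gamma^{(2)})$ one has \[ \frac{1}{N} \Delta (\boldsymbol{\gamma},(\boldsymbol{x}_n)_{0 \leq n < 2^m}) \leq -\frac{1}{4} \cdot \frac{1}{2^{m+2}}\, m, \] and consequently \[ D^{*}((\boldsymbol{x}_n)_{0 \leq n < N}) \geq \frac{1}{16 \log 2} \frac{\log N}{N}. \]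
   Context: For integers $b \geq 2$, $s \geq 1$, $0 \leq t \leq m$, a $(t,m,s)$-net in base $b$ is a set (family) of $b^m$ points $\boldsymbol{x}_0,\dots,\boldsymbol{x}_{b^m-1}$ in $[0,1)^s$ such that every interval of the form $\prod_{i=1}^s [a_i b^{-d_i}, (a_i+1) b^{-d_i})$ with $d_i \in \mathbb{N}_0$, $a_i \in \{0,\dots,b^{d_i}-1\}$ and volume $b^{-m+t}$ contains exactly $b^t$ of the points. For a finite family of points $(\boldsymbol{x}_n)_{n}$ in $[0,1)^s$ and $\boldsymbol{y} = (y^{(1)},\dots,y^{(s)}) \in [0,1]^s$, the discrepancy function is $\Delta(\boldsymbol{y},(\boldsymbol{x}_n)_n) = \sum_{n} \big(\chi_{[\boldsymbol{0},\boldsymbol{y})}(\boldsymbol{x}_n) - y^{(1)}\cdots y^{(s)}\big)$, where $[\boldsymbol{0},\boldsymbol{y}) = [0,y^{(1)})\times\cdots\times[0,y^{(s)})$ and $\chi$ denotes the indicator function; the star-discrepancy of an $N$-point family is $D^*((\boldsymbol{x}_n)_n) = \sup_{\boldsymbol{y} \in [0,1)^s} \big| \frac{1}{N}\Delta(\boldsymbol{y},(\boldsymbol{x}_n)_n)\big|$. $\log$ denotes the natural logarithm. *)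

theory Defs
  imports Complex_Main
begin

definition is_net :: "nat \<Rightarrow> nat \<Rightarrow> nat \<Rightarrow> nat \<Rightarrow> (nat \<Rightarrow> nat \<Rightarrow> real) \<Rightarrow> bool" where
  "is_net b t m s x \<longleftrightarrow> t \<le> m \<and>
     (\<forall>n < b ^ m. \<forall>i < s. 0 \<le> x n i \<and> x n i < 1) \<and>
     (\<forall>(d :: nat \<Rightarrow> nat) (a :: nat \<Rightarrow> nat).
        (\<forall>i < s. a i < b ^ d i) \<and> (\<Prod>i<s. 1 / real b ^ d i) = real b powr (real t - real m) \<longrightarrow>
        card {n. n < b ^ m \<and> (\<forall>i < s. real (a i) / real b ^ d i \<le> x n i \<and>
                                   x n i < (real (a i) + 1) / real b ^ d i)} = b ^ t)"

definition discrepancy_fun :: "nat \<Rightarrow> nat \<Rightarrow> (nat \<Rightarrow> nat \<Rightarrow> real) \<Rightarrow> (nat \<Rightarrow> real) \<Rightarrow> real" where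
  "discrepancy_fun s N x y =
     (\<Sum>n<N. (if (\<forall>i<s. 0 \<le> x n i \<and> x n i < y i) then 1 else 0) - (\<Prod>i<s. y i))"

definition star_discrepancy :: "nat \<Rightarrow> nat \<Rightarrow> (nat \<Rightarrow> nat \<Rightarrow> real) \<Rightarrow> real" where
  "star_discrepancy s N x =
     (SUP y \<in> {y :: nat \<Rightarrow> real. \<forall>i<s. 0 \<le> y i \<and> y i < 1}. \<bar>discrepancy_fun s N x y / real N\<bar>)"

end

(*
  Scale both coordinates by 2^m = 2^(4M) and read them as integers U n, V n. With
  R = repunit4 M = 11...1 (M digits in base 4), the anchor point x_0 = gamma has integer
  coordinates (R * 4^M, R). A point of the box J_gamma has U n < R * 4^M, so for some first
  k \<in> {1..M} the top k base-4 digits of U n read 1...10. The (0,m,2)-net property, applied to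
  boxes of shape 2^(-2k) x 2^(2k-m), lets the points of this class be told apart by the top
  M-k base-4 digits of V n, which are at most repunit4 (M-k); the largest value is excluded
  because such a point would share a box of shape 2^(1-2k) x 2^(2k-1-m) with x_0. Hence J_gamma
  holds at most sum_{j<M} repunit4 j = (R - M)/3 points, while its expected number of
  points is R^2/4^M = R^2/(3R + 1); the difference is at most -M/4 = -m/16.
*)
theory Submission imports Defs begin

fun repunit4 :: "nat \<Rightarrow> nat" where
  "repunit4 0 = 0"
| "repunit4 (Suc j) = 4 * repunit4 j + 1"

lemma repunit4_closed_form: "3 * repunit4 j + 1 = 4 ^ j"
  by (induction j) auto

lemma repunit4_add: "repunit4 (a + b) = 4 ^ b * repunit4 a + repunit4 b"
  by (induction b) (auto simp: algebra_simps)

lemma double_repunit4_less: "2 * repunit4 j < 4 ^ j"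
  using repunit4_closed_form[of j] by linarith

lemma odd_repunit4: "j \<ge> 1 \<Longrightarrow> odd (repunit4 j)"
  by (cases j) auto

lemma sum_repunit4: "3 * (\<Sum>j<M. repunit4 j) + M = repunit4 M"
  by (induction M) auto

lemma repunit4_div_mod_pow4:
  assumes "j \<le> M"
  shows "repunit4 M div 4 ^ j = repunit4 (M - j)" and "repunit4 M mod 4 ^ j = repunit4 j"
proof -
  have split: "repunit4 M = 4 ^ j * repunit4 (M - j) + repunit4 j"
    using repunit4_add[of "M - j" j] assms by simp
  have "repunit4 j < 4 ^ j" using double_repunit4_less[of j] by linarith
  then show "repunit4 M div 4 ^ j = repunit4 (M - j)" and "repunit4 M mod 4 ^ j = repunit4 j"
    unfolding split by simp_all
qed

text \<open>Read as \<open>M\<close>-digit base-4 numerals, \<open>v\<close> first deviates from \<open>11\<dots>1\<close> at some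
  position \<open>k\<close> with a digit \<open>0\<close>, so its top \<open>k\<close> digits are \<open>1\<dots>10\<close>.\<close>
lemma less_repunit4_imp_prefix:
  "v < repunit4 M \<Longrightarrow> \<exists>k\<in>{1..M}. v div 4 ^ (M - k) = repunit4 k - 1"
proof (induction M arbitrary: v)
  case 0
  then show ?case by simp
next
  case (Suc M)
  show ?case
  proof (cases "v div 4 < repunit4 M")
    case True
    then obtain k where k: "k \<in> {1..M}" "v div 4 div 4 ^ (M - k) = repunit4 k - 1"
      using Suc.IH by blast
    have "Suc M - k = Suc (M - k)" using k by auto
    then have "v div 4 ^ (Suc M - k) = v div 4 div 4 ^ (M - k)" by (simp add: div_mult2_eq)
    then show ?thesis using k by (intro bexI[of _ k]) auto
  next
    case False
    then have "v = 4 * repunit4 M" using Suc.prems by simp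
    then show ?thesis by (intro bexI[of _ "Suc M"]) auto
  qed
qed

lemma div_eq_double_div_double:
  fixes v K :: nat
  assumes "v mod (2 * K) < K"
  shows "v div K = 2 * (v div (2 * K))"
proof -
  have "v = 2 * K * (v div (2 * K)) + v mod (2 * K)" by simp
  then have "v div K = (K * (2 * (v div (2 * K))) + v mod (2 * K)) div K"
    by (metis mult.assoc mult.commute)
  also have "\<dots> = 2 * (v div (2 * K))" using assms by simp
  finally show ?thesis .
qed

text \<open>Integer coordinates \<open>U n, V n < 2 ^ m\<close> of \<open>N\<close> points (the reals scaled by \<open>2 ^ m\<close>):
  every elementary dyadic box of volume \<open>2 ^ -m\<close> contains at most one of them.\<close>
definition dyadic_separated :: "nat \<Rightarrow> nat \<Rightarrow> (nat \<Rightarrow> nat) \<Rightarrow> (nat \<Rightarrow> nat) \<Rightarrow> bool" where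
  "dyadic_separated m N U V \<longleftrightarrow>
     (\<forall>n<N. \<forall>n'<N. \<forall>d\<le>m. U n div 2 ^ (m - d) = U n' div 2 ^ (m - d) \<longrightarrow>
        V n div 2 ^ d = V n' div 2 ^ d \<longrightarrow> n = n')"

lemma dyadic_separatedD:
  "dyadic_separated m N U V \<Longrightarrow> n < N \<Longrightarrow> n' < N \<Longrightarrow> d \<le> m \<Longrightarrow>
    U n div 2 ^ (m - d) = U n' div 2 ^ (m - d) \<Longrightarrow> V n div 2 ^ d = V n' div 2 ^ d \<Longrightarrow> n = n'"
  unfolding dyadic_separated_def by blast

text \<open>\<open>repunit4 k - 1\<close> and \<open>repunit4 k\<close> differ only in their last binary digit, so such a
  point shares an elementary box of shape \<open>2 ^ (1 - 2 * k) \<times> 2 ^ (2 * k - 1 - 4 * M)\<close>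
  with the anchor point \<open>0\<close>.\<close>
lemma prefix_class_top_is_anchor:
  assumes sep: "dyadic_separated (4 * M) N U V" and "n < N" "0 < N"
    and U0: "U 0 = repunit4 M * 4 ^ M" and V0: "V 0 = repunit4 M"
    and k: "k \<in> {1..M}"
    and U_prefix: "U n div 4 ^ (2 * M - k) = repunit4 k - 1"
    and V_less: "V n < repunit4 M" and V_prefix: "V n div 4 ^ k = repunit4 (M - k)"
  shows "n = 0"
proof (rule dyadic_separatedD[OF sep \<open>n < N\<close> \<open>0 < N\<close>, of "2 * k - 1"])
  define K where "K = (2::nat) ^ (2 * k - 1)"
  have four_k: "4 ^ k = 2 * K"
  proof -
    have "2 * k = Suc (2 * k - 1)" using k by auto
    then have "(2::nat) ^ (2 * k) = 2 * K" unfolding K_def by (metis power_Suc)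
    then show ?thesis by (simp add: power_mult)
  qed
  have "repunit4 k < K" using double_repunit4_less[of k] four_k by simp
  have V0_mod: "V 0 mod 4 ^ k = repunit4 k" and V0_div: "V 0 div 4 ^ k = repunit4 (M - k)"
    using repunit4_div_mod_pow4[of k M] k V0 by auto
  have "V n = 4 ^ k * repunit4 (M - k) + V n mod 4 ^ k"
    using V_prefix div_mult_mod_eq[of "V n" "4 ^ k"] by (simp add: mult.commute)
  moreover have "V 0 = 4 ^ k * repunit4 (M - k) + repunit4 k"
    using V0_div V0_mod div_mult_mod_eq[of "V 0" "4 ^ k"] by (simp add: mult.commute)
  ultimately have "V n mod 4 ^ k < repunit4 k" using V_less V0 by linarith
  then show "V n div 2 ^ (2 * k - 1) = V 0 div 2 ^ (2 * k - 1)"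
    using div_eq_double_div_double[of "V n" K] div_eq_double_div_double[of "V 0" K]
      V_prefix V0_div V0_mod \<open>repunit4 k < K\<close> four_k unfolding K_def by simp
  have pow_split: "(4::nat) ^ (2 * M - k) = 4 ^ M * 4 ^ (M - k)"
    using k by (simp add: power_add[symmetric])
  have "U 0 div 4 ^ (2 * M - k) = repunit4 k"
    using U0 repunit4_div_mod_pow4(1)[of "M - k" M] k by (simp add: pow_split div_mult2_eq)
  moreover have "(repunit4 k - 1) div 2 = repunit4 k div 2"
    using odd_repunit4[of k] k by (auto elim!: oddE)
  moreover have "(2::nat) ^ (4 * M - (2 * k - 1)) = 4 ^ (2 * M - k) * 2"
  proof -
    have "4 * M - (2 * k - 1) = Suc (2 * (2 * M - k))" using k by auto
    then show ?thesis by (simp add: power_mult)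
  qed
  ultimately show "U n div 2 ^ (4 * M - (2 * k - 1)) = U 0 div 2 ^ (4 * M - (2 * k - 1))"
    using U_prefix by (simp add: div_mult2_eq)
qed (use k in auto)

lemma card_prefix_class_le:
  assumes sep: "dyadic_separated (4 * M) N U V" and "0 < N"
    and U0: "U 0 = repunit4 M * 4 ^ M" and V0: "V 0 = repunit4 M"
    and k: "k \<in> {1..M}"
  shows "card {n. n < N \<and> U n < repunit4 M * 4 ^ M \<and> V n < repunit4 M \<and>
                   U n div 4 ^ (2 * M - k) = repunit4 k - 1} \<le> repunit4 (M - k)"
    (is "card ?P \<le> _")
proof -
  have pow_eq: "(2::nat) ^ (4 * M - 2 * k) = 4 ^ (2 * M - k)"
  proof -
    have "4 * M - 2 * k = 2 * (2 * M - k)" by simp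
    then show ?thesis by (simp add: power_mult)
  qed
  have inj: "inj_on (\<lambda>n. V n div 4 ^ k) ?P"
  proof (rule inj_onI)
    fix n n' assume n: "n \<in> ?P" and n': "n' \<in> ?P" and "V n div 4 ^ k = V n' div 4 ^ k"
    moreover have "(2::nat) ^ (2 * k) = 4 ^ k" by (simp add: power_mult)
    moreover have "U n div 2 ^ (4 * M - 2 * k) = U n' div 2 ^ (4 * M - 2 * k)"
      using n n' unfolding pow_eq by simp
    ultimately show "n = n'"
      using dyadic_separatedD[OF sep, of n n' "2 * k"] k by simp
  qed
  have img: "(\<lambda>n. V n div 4 ^ k) ` ?P \<subseteq> {..<repunit4 (M - k)}"
  proof clarify
    fix n assume n: "n < N" "U n < repunit4 M * 4 ^ M" "V n < repunit4 M"
      and U_prefix: "U n div 4 ^ (2 * M - k) = repunit4 k - 1"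
    have "V n div 4 ^ k \<le> repunit4 M div 4 ^ k" using n(3) by (simp add: div_le_mono)
    then have "V n div 4 ^ k \<le> repunit4 (M - k)" using repunit4_div_mod_pow4(1)[of k M] k by simp
    moreover have "V n div 4 ^ k \<noteq> repunit4 (M - k)"
    proof
      assume "V n div 4 ^ k = repunit4 (M - k)"
      then have "n = 0"
        using prefix_class_top_is_anchor[OF sep n(1) \<open>0 < N\<close> U0 V0 k U_prefix n(3)] by blast
      then show False using n(2) U0 by simp
    qed
    ultimately show "V n div 4 ^ k < repunit4 (M - k)" by simp
  qed
  show ?thesis using card_inj_on_le[OF inj img] by simp
qed

lemma sum_repunit4_reverse: "(\<Sum>k\<in>{1..M}. repunit4 (M - k)) = (\<Sum>j<M. repunit4 j)"
  by (rule sum.reindex_bij_witness[of _ "\<lambda>j. M - j" "\<lambda>k. M - k"]) auto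

lemma card_below_anchor_le:
  assumes sep: "dyadic_separated (4 * M) N U V" and "0 < N"
    and U0: "U 0 = repunit4 M * 4 ^ M" and V0: "V 0 = repunit4 M"
  shows "card {n. n < N \<and> U n < repunit4 M * 4 ^ M \<and> V n < repunit4 M} \<le> (\<Sum>j<M. repunit4 j)"
proof -
  define P where "P k = {n. n < N \<and> U n < repunit4 M * 4 ^ M \<and> V n < repunit4 M \<and>
                            U n div 4 ^ (2 * M - k) = repunit4 k - 1}" for k
  have "{n. n < N \<and> U n < repunit4 M * 4 ^ M \<and> V n < repunit4 M} \<subseteq> (\<Union>k\<in>{1..M}. P k)"
  proof clarify
    fix n assume n: "n < N" "U n < repunit4 M * 4 ^ M" "V n < repunit4 M"
    then have "U n div 4 ^ M < repunit4 M" by (simp add: less_mult_imp_div_less)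
    then obtain k where k: "k \<in> {1..M}" "U n div 4 ^ M div 4 ^ (M - k) = repunit4 k - 1"
      using less_repunit4_imp_prefix by blast
    have "(4::nat) ^ (2 * M - k) = 4 ^ M * 4 ^ (M - k)" using k by (simp add: power_add[symmetric])
    then have "n \<in> P k" using k n by (simp add: P_def div_mult2_eq)
    then show "n \<in> (\<Union>k\<in>{1..M}. P k)" using k by blast
  qed
  then have "card {n. n < N \<and> U n < repunit4 M * 4 ^ M \<and> V n < repunit4 M}
      \<le> card (\<Union>k\<in>{1..M}. P k)"
    by (rule card_mono[rotated]) (auto simp: P_def)
  also have "\<dots> \<le> (\<Sum>k\<in>{1..M}. card (P k))" by (rule card_UN_le) simp
  also have "\<dots> \<le> (\<Sum>k\<in>{1..M}. repunit4 (M - k))"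
    by (rule sum_mono) (use card_prefix_class_le[OF assms] in \<open>simp add: P_def\<close>)
  finally show ?thesis by (simp only: sum_repunit4_reverse)
qed

definition dyadic_floor :: "nat \<Rightarrow> real \<Rightarrow> nat" where
  "dyadic_floor m u = nat \<lfloor>u * 2 ^ m\<rfloor>"

lemma dyadic_floor_less_iff: "0 \<le> u \<Longrightarrow> dyadic_floor m u < c \<longleftrightarrow> u < real c / 2 ^ m"
  unfolding dyadic_floor_def by (simp add: nat_less_iff floor_less_iff pos_less_divide_eq)

lemma dyadic_floor_of_nat: "dyadic_floor m (real c / 2 ^ m) = c"
  unfolding dyadic_floor_def by simp

lemma dyadic_floor_div_pow2:
  assumes "0 \<le> u" "d \<le> m"
  shows "dyadic_floor m u div 2 ^ (m - d) = nat \<lfloor>u * 2 ^ d\<rfloor>"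
proof -
  have "(2::real) ^ m = 2 ^ d * 2 ^ (m - d)"
    using assms(2) by (simp add: power_add[symmetric])
  then have "u * 2 ^ m / real_of_int (2 ^ (m - d)) = u * 2 ^ d" by simp
  then have "\<lfloor>u * 2 ^ m\<rfloor> div 2 ^ (m - d) = \<lfloor>u * 2 ^ d\<rfloor>"
    using floor_divide_real_eq_div[of "2 ^ (m - d)" "u * 2 ^ m"] by simp
  moreover have "nat (\<lfloor>u * 2 ^ m\<rfloor> div 2 ^ (m - d)) = nat \<lfloor>u * 2 ^ m\<rfloor> div nat (2 ^ (m - d))"
    using assms(1) by (simp add: nat_div_distrib)
  ultimately show ?thesis unfolding dyadic_floor_def by (simp add: nat_power_eq)
qed

lemma dyadic_floor_div_eq_iff:
  assumes "0 \<le> u" "d \<le> m"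
  shows "dyadic_floor m u div 2 ^ (m - d) = a \<longleftrightarrow>
         real a / 2 ^ d \<le> u \<and> u < (real a + 1) / 2 ^ d"
proof -
  have "nat \<lfloor>u * 2 ^ d\<rfloor> = a \<longleftrightarrow> \<lfloor>u * 2 ^ d\<rfloor> = int a"
    using assms(1) by auto
  also have "\<dots> \<longleftrightarrow> real a \<le> u * 2 ^ d \<and> u * 2 ^ d < real a + 1"
    by (simp add: floor_eq_iff)
  also have "\<dots> \<longleftrightarrow> real a / 2 ^ d \<le> u \<and> u < (real a + 1) / 2 ^ d"
    by (simp add: divide_le_eq less_divide_eq)
  finally show ?thesis using dyadic_floor_div_pow2[OF assms] by simp
qed

lemma is_net_range: "is_net b t m s x \<Longrightarrow> n < b ^ m \<Longrightarrow> i < s \<Longrightarrow> 0 \<le> x n i \<and> x n i < 1"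
  unfolding is_net_def by blast

lemma is_net_dyadic_separated:
  assumes net: "is_net 2 0 m 2 x"
  shows "dyadic_separated m (2 ^ m) (\<lambda>n. dyadic_floor m (x n 0)) (\<lambda>n. dyadic_floor m (x n 1))"
  unfolding dyadic_separated_def
proof (intro allI impI)
  fix n n' d assume n: "n < 2 ^ m" and n': "n' < 2 ^ m" and "d \<le> m"
    and U: "dyadic_floor m (x n 0) div 2 ^ (m - d) = dyadic_floor m (x n' 0) div 2 ^ (m - d)"
    and V: "dyadic_floor m (x n 1) div 2 ^ d = dyadic_floor m (x n' 1) div 2 ^ d"
  define e where "e i = (if i = 0 then d else m - d)" for i :: nat
  define a where "a i = dyadic_floor m (x n i) div 2 ^ (m - e i)" for i
  have e_le: "e i \<le> m" for i using \<open>d \<le> m\<close> by (simp add: e_def)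
  have x_range: "0 \<le> x k i \<and> x k i < 1" if "k < 2 ^ m" "i < 2" for k i
    using is_net_range[OF net that] .
  have a_less: "\<forall>i<2. a i < 2 ^ e i"
  proof clarify
    fix i :: nat assume "i < 2"
    then have "a i = dyadic_floor (e i) (x n i)"
      using dyadic_floor_div_pow2[OF _ e_le] x_range[OF n] by (simp add: a_def dyadic_floor_def)
    then show "a i < 2 ^ e i" using x_range[OF n \<open>i < 2\<close>] by (simp add: dyadic_floor_less_iff)
  qed
  have volume: "(\<Prod>i<2. 1 / real 2 ^ e i) = real 2 powr (real 0 - real m)"
  proof -
    have "(\<Prod>i<2. 1 / real 2 ^ e i) = 1 / 2 ^ (d + (m - d))"
      by (simp add: e_def numeral_2_eq_2 power_add)
    then show ?thesis using \<open>d \<le> m\<close> by (simp add: powr_minus powr_realpow divide_inverse)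
  qed
  define S where "S = {k. k < 2 ^ m \<and> (\<forall>i<2. real (a i) / real 2 ^ e i \<le> x k i \<and>
                                         x k i < (real (a i) + 1) / real 2 ^ e i)}"
  have "card S = 1" using net a_less volume unfolding is_net_def S_def by fastforce
  have in_S: "k \<in> S" if "k < 2 ^ m" "\<forall>i<2. dyadic_floor m (x k i) div 2 ^ (m - e i) = a i" for k
    using that dyadic_floor_div_eq_iff[OF _ e_le] x_range[OF that(1)] by (simp add: S_def)
  have "n \<in> S" by (rule in_S[OF n]) (simp add: a_def)
  moreover have "n' \<in> S"
    using \<open>d \<le> m\<close> U V by (intro in_S[OF n']) (auto simp: a_def e_def less_2_cases_iff)
  ultimately show "n = n'" using \<open>card S = 1\<close> by (metis card_1_singletonE singletonD)
qed

lemma sum_inverse_pow4: "(\<Sum>k=1..M. 1 / 2 ^ (2 * k) :: real) = real (repunit4 M) / 4 ^ M"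
proof (induction M)
  case 0
  then show ?case by simp
next
  case (Suc M)
  then have "(\<Sum>k=1..Suc M. 1 / 2 ^ (2 * k) :: real) = real (repunit4 M) / 4 ^ M + 1 / 4 ^ Suc M"
    by (simp add: power_mult)
  also have "\<dots> = real (repunit4 (Suc M)) / 4 ^ Suc M" by (simp add: field_simps)
  finally show ?case .
qed

lemma sum_inverse_pow4_shifted:
  "(\<Sum>k=1..M. 1 / 2 ^ (e + 2 * k) :: real) = real (repunit4 M) / (2 ^ e * 4 ^ M)"
proof -
  have "(\<Sum>k=1..M. 1 / 2 ^ (e + 2 * k) :: real) = (\<Sum>k=1..M. 1 / 2 ^ (2 * k)) / 2 ^ e"
    by (simp add: sum_divide_distrib power_add mult.commute)
  also have "\<dots> = real (repunit4 M) / (2 ^ e * 4 ^ M)"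
    unfolding sum_inverse_pow4 by simp
  finally show ?thesis .
qed

lemma sum_repunit4_minus_square_le:
  assumes "M \<ge> 1"
  shows "real (\<Sum>j<M. repunit4 j) - real (repunit4 M) ^ 2 / 4 ^ M \<le> - real M / 4"
proof -
  define g where "g = real (repunit4 M)"
  have sum_eq: "real (\<Sum>j<M. repunit4 j) = (g - M) / 3"
    using arg_cong[OF sum_repunit4[of M], of real] unfolding g_def by simp
  have pow_eq: "(4::real) ^ M = 3 * g + 1"
    using arg_cong[OF repunit4_closed_form[of M], of real] unfolding g_def by simp
  have "g \<ge> 1" using assms by (cases M) (auto simp: g_def)
  have "g * (4 - 3 * real M) \<le> M"
  proof (cases "M = 1")
    case True
    then show ?thesis by (simp add: g_def)
  next
    case False
    then have "g * (4 - 3 * real M) \<le> 0"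
      using assms \<open>g \<ge> 1\<close> by (intro mult_nonneg_nonpos) auto
    then show ?thesis by simp
  qed
  then have "(g * (4 - 3 * real M) - real M) / (12 * (3 * g + 1)) \<le> 0"
    using \<open>g \<ge> 1\<close> by (intro divide_nonpos_pos) auto
  moreover have "(g - M) / 3 - g ^ 2 / (3 * g + 1) + M / 4
      = (g * (4 - 3 * real M) - real M) / (12 * (3 * g + 1))"
    using \<open>g \<ge> 1\<close> by (simp add: field_simps power2_eq_square)
  ultimately show ?thesis unfolding sum_eq pow_eq g_def[symmetric] by linarith
qed

lemma discrepancy_fun_eq_card:
  "discrepancy_fun s N x y =
     real (card {n. n < N \<and> (\<forall>i<s. 0 \<le> x n i \<and> x n i < y i)}) - real N * (\<Prod>i<s. y i)"
  unfolding discrepancy_fun_def by (simp add: sum_subtractf sum.If_cases lessThan_def Collect_conj_eq)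

lemma discrepancy_fun_cong:
  "(\<And>i. i < s \<Longrightarrow> y i = y' i) \<Longrightarrow> discrepancy_fun s N x y = discrepancy_fun s N x y'"
  unfolding discrepancy_fun_def by simp

lemma abs_discrepancy_fun_le:
  assumes "\<forall>i<s. 0 \<le> y i \<and> y i \<le> 1"
  shows "\<bar>discrepancy_fun s N x y\<bar> \<le> real N"
proof -
  have "0 \<le> (\<Prod>i<s. y i)" "(\<Prod>i<s. y i) \<le> 1"
    using assms by (auto intro: prod_nonneg prod_le_1)
  then have "\<bar>(if \<forall>i<s. 0 \<le> x n i \<and> x n i < y i then 1 else 0) - (\<Prod>i<s. y i)\<bar> \<le> (1::real)"
    for n by auto
  then have "\<bar>discrepancy_fun s N x y\<bar> \<le> (\<Sum>n<N. 1)"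
    unfolding discrepancy_fun_def by (intro order_trans[OF sum_abs sum_mono])
  then show ?thesis by simp
qed

lemma abs_discrepancy_le_star_discrepancy:
  assumes "\<forall>i<s. 0 \<le> y i \<and> y i < 1"
  shows "\<bar>discrepancy_fun s N x y / real N\<bar> \<le> star_discrepancy s N x"
  unfolding star_discrepancy_def
proof (rule cSUP_upper)
  show "y \<in> {y. \<forall>i<s. 0 \<le> y i \<and> y i < 1}" using assms by simp
  have "\<bar>discrepancy_fun s N x z / real N\<bar> \<le> 1" if "\<forall>i<s. 0 \<le> z i \<and> z i < 1" for z
    using abs_discrepancy_fun_le[of s z N x] that
    by (cases "N = 0") (auto simp: abs_divide divide_le_eq_1 less_imp_le)
  then show "bdd_above ((\<lambda>y. \<bar>discrepancy_fun s N x y / real N\<bar>) ` {y. \<forall>i<s. 0 \<le> y i \<and> y i < 1})"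
    by (intro bdd_aboveI2) auto
qed

lemma card_net_box_below_anchor_le:
  assumes net: "is_net 2 0 (4 * M) 2 x"
    and x00: "x 0 0 = real (repunit4 M) / 4 ^ M" and x01: "x 0 1 = real (repunit4 M) / 2 ^ (4 * M)"
  shows "card {n. n < 2 ^ (4 * M) \<and> (\<forall>i<2. 0 \<le> x n i \<and> x n i < x 0 i)} \<le> (\<Sum>j<M. repunit4 j)"
proof -
  define U where "U n = dyadic_floor (4 * M) (x n 0)" for n
  define V where "V n = dyadic_floor (4 * M) (x n 1)" for n
  have "(2::real) ^ (4 * M) = 4 ^ M * 4 ^ M"
    by (simp add: power_mult power_mult_distrib[symmetric])
  then have x00': "x 0 0 = real (repunit4 M * 4 ^ M) / 2 ^ (4 * M)" using x00 by simp
  then have U0: "U 0 = repunit4 M * 4 ^ M" unfolding U_def by (simp only: dyadic_floor_of_nat)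
  have V0: "V 0 = repunit4 M" using x01 by (simp add: V_def dyadic_floor_of_nat)
  have sep: "dyadic_separated (4 * M) (2 ^ (4 * M)) U V"
    unfolding U_def V_def by (rule is_net_dyadic_separated[OF net])
  have "{n. n < 2 ^ (4 * M) \<and> (\<forall>i<2. 0 \<le> x n i \<and> x n i < x 0 i)}
      \<subseteq> {n. n < 2 ^ (4 * M) \<and> U n < repunit4 M * 4 ^ M \<and> V n < repunit4 M}"
  proof (clarify, intro conjI)
    fix n assume "n < 2 ^ (4 * M)" and box: "\<forall>i<2. 0 \<le> x n i \<and> x n i < x 0 i"
    from box have "0 \<le> x n 0" "x n 0 < x 0 0" "0 \<le> x n 1" "x n 1 < x 0 1" by auto
    then show "U n < repunit4 M * 4 ^ M" "V n < repunit4 M"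
      unfolding U_def V_def x00' x01 by (simp_all only: dyadic_floor_less_iff)
  qed
  then have "card {n. n < 2 ^ (4 * M) \<and> (\<forall>i<2. 0 \<le> x n i \<and> x n i < x 0 i)}
      \<le> card {n. n < 2 ^ (4 * M) \<and> U n < repunit4 M * 4 ^ M \<and> V n < repunit4 M}"
    by (rule card_mono[rotated]) simp
  also have "\<dots> \<le> (\<Sum>j<M. repunit4 j)"
    by (rule card_below_anchor_le[OF sep _ U0 V0]) simp
  finally show ?thesis .
qed

lemma discrepancy_below_anchor_le:
  assumes "is_net 2 0 (4 * M) 2 x" and "M \<ge> 1"
    and x00: "x 0 0 = real (repunit4 M) / 4 ^ M" and x01: "x 0 1 = real (repunit4 M) / 2 ^ (4 * M)"
  shows "discrepancy_fun 2 (2 ^ (4 * M)) x (x 0) \<le> - real M / 4"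
proof -
  have "(2::real) ^ (4 * M) * (x 0 0 * x 0 1) = real (repunit4 M) ^ 2 / 4 ^ M"
    unfolding x00 x01 by (simp add: power2_eq_square)
  then have "discrepancy_fun 2 (2 ^ (4 * M)) x (x 0)
      = real (card {n. n < 2 ^ (4 * M) \<and> (\<forall>i<2. 0 \<le> x n i \<and> x n i < x 0 i)})
        - real (repunit4 M) ^ 2 / 4 ^ M"
    by (simp add: discrepancy_fun_eq_card numeral_2_eq_2)
  also have "\<dots> \<le> real (\<Sum>j<M. repunit4 j) - real (repunit4 M) ^ 2 / 4 ^ M"
    using card_net_box_below_anchor_le[OF assms(1) x00 x01]
    by (simp only: of_nat_le_iff diff_right_mono)
  also have "\<dots> \<le> - real M / 4" by (rule sum_repunit4_minus_square_le[OF \<open>M \<ge> 1\<close>])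
  finally show ?thesis .
qed

theorem theorem3:
  fixes m :: nat and x :: "nat \<Rightarrow> nat \<Rightarrow> real"
  assumes "m \<ge> 4" and "m mod 4 = 0"
    and "is_net 2 0 m 2 x"
    and "x 0 0 = (\<Sum>k=1..m div 4. 1 / 2 ^ (2 * k))"
    and "x 0 1 = (\<Sum>k=1..m div 4. 1 / 2 ^ (m div 2 + 2 * k))"
  shows "discrepancy_fun 2 (2 ^ m) x
           (\<lambda>i. if i = 0 then (\<Sum>k=1..m div 4. 1 / 2 ^ (2 * k))
                else (\<Sum>k=1..m div 4. 1 / 2 ^ (m div 2 + 2 * k))) / 2 ^ m
           \<le> - (1 / 4) * (1 / 2 ^ (m + 2)) * real m \<and>
         star_discrepancy 2 (2 ^ m) x \<ge> 1 / (16 * ln 2) * (ln (2 ^ m) / 2 ^ m)"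
    (is "discrepancy_fun 2 _ x ?\<gamma> / _ \<le> _ \<and> _")
proof -
  define M where "M = m div 4"
  have m: "m = 4 * M" and "M \<ge> 1" using assms(1,2) by (auto simp: M_def)
  have "(2::real) ^ (2 * M) * 4 ^ M = 2 ^ (4 * M)"
    by (simp add: power_mult power_mult_distrib[symmetric])
  then have x0: "x 0 0 = real (repunit4 M) / 4 ^ M" "x 0 1 = real (repunit4 M) / 2 ^ (4 * M)"
    using assms(4,5) sum_inverse_pow4[of M] sum_inverse_pow4_shifted[of "2 * M" M]
    by (simp_all add: m)
  have \<gamma>: "?\<gamma> i = x 0 i" if "i < 2" for i
    using that assms(4,5) by (auto simp: less_2_cases_iff)
  have "discrepancy_fun 2 (2 ^ m) x ?\<gamma> \<le> - real m / 16"
    using discrepancy_below_anchor_le[OF assms(3)[unfolded m] \<open>M \<ge> 1\<close> x0]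
      discrepancy_fun_cong[of 2 ?\<gamma> "x 0", OF \<gamma>] by (simp add: m)
  then have lower:
    "discrepancy_fun 2 (2 ^ m) x ?\<gamma> / 2 ^ m \<le> - (1 / 4) * (1 / 2 ^ (m + 2)) * real m"
    by (simp add: field_simps)
  have "\<forall>i<2. 0 \<le> ?\<gamma> i \<and> ?\<gamma> i < 1"
    using \<gamma> is_net_range[OF assms(3), of 0] by simp
  then have "\<bar>discrepancy_fun 2 (2 ^ m) x ?\<gamma> / 2 ^ m\<bar> \<le> star_discrepancy 2 (2 ^ m) x"
    using abs_discrepancy_le_star_discrepancy[of 2 ?\<gamma> "2 ^ m" x] by simp
  moreover have "1 / (16 * ln 2) * (ln (2 ^ m) / 2 ^ m)
      = (1 / 4) * (1 / 2 ^ (m + 2)) * (real m :: real)"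
    by (simp add: ln_realpow field_simps)
  ultimately show ?thesis using lower by linarith
qed

end
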